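(* Let $(X_t)_{t\in\mathbb{N}}$ be i.i.d. real random variables on a probability space $(\Omega,\mathcal{F},\mathbb{P})$ with $\mathbb{E}[|X_1|]<\infty$ and $\mathbb{E}[X_1]=0$, and define $r(K)=\mathbb{E}\big[|X_1|\mathbf{1}_{\{|X_1|>K\}}\big]$ for $K\ge0$. Then for all $\varepsilon>0$, $\gamma>0$ and $K\ge1$, $$\mathbb{P}\Big(\sup_{t\in\mathbb{N}}\frac{1}{\gamma+t}\Big|\sum_{s=1}^tX_s\Big| > \varepsilon + r(K)\Big) \le \frac{8K^2}{\gamma\varepsilon^2} + \Big(\frac{16}{\varepsilon^2}+2\Big)r(K).$$ *)

theory Defs
  imports "HOL-Probability.Probability"
begin

definition tail_mass :: "'a measure \<Rightarrow> ('a \<Rightarrow> real) \<Rightarrow> real \<Rightarrow> real" where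
  "tail_mass M Y K = (\<integral>\<omega>. \<bar>Y \<omega>\<bar> * indicator {\<omega>. \<bar>Y \<omega>\<bar> > K} \<omega> \<partial>M)"

end

theory Submission
  imports Defs
begin

text \<open>Truncate each \<open>X s\<close> at level \<open>max K s\<close> and recentre it. The centred truncations are
  independent, bounded and of mean zero, so the Hajek-Renyi inequality with the decreasing weights
  \<open>1 / (\<gamma> + t)\<close> bounds the probability that one of their weighted partial sums reaches \<open>\<epsilon>\<close> by
  the weighted sum of their second moments divided by \<open>\<epsilon>\<^sup>2\<close>; the estimates
  \<open>\<Sum>\<^sub>t 1 / (\<gamma> + t)\<^sup>2 \<le> 1 / \<gamma>\<close> and \<open>\<Sum>\<^sub>t\<^sub>\<ge>\<^sub>y 1 / t\<^sup>2 \<le> 2 / y\<close> bound that sum by \<open>K\<^sup>2 / \<gamma> + 2 r(K)\<close>.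
  Some \<open>\<bar>X s\<bar>\<close> exceeds its level with probability at most \<open>\<Sum>\<^sub>s P(\<bar>X 1\<bar> > max K s) \<le> r(K)\<close>;
  off that event the original and the truncated partial sums differ by at most \<open>t r(K)\<close>, because
  \<open>E X 1 = 0\<close> makes every recentring constant at most \<open>r(K)\<close> in absolute value. This gives the
  sharper bound \<open>r(K) + (K\<^sup>2 / \<gamma> + 2 r(K)) / \<epsilon>\<^sup>2\<close> on every finite horizon, and continuity from
  below passes to the supremum.\<close>

definition truncate :: "real \<Rightarrow> real \<Rightarrow> real" where
  "truncate L x = (if \<bar>x\<bar> \<le> L then x else 0)"

lemma abs_truncate_le: "0 \<le> L \<Longrightarrow> \<bar>truncate L x\<bar> \<le> L"
  by (simp add: truncate_def)

lemma truncate_measurable [measurable]: "truncate L \<in> borel_measurable borel"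
  unfolding truncate_def by measurable

lemma inverse_square_le_telescope:
  fixes x :: real
  assumes "x \<ge> 1"
  shows "1 / x\<^sup>2 \<le> 2 / x - 2 / (x + 1)"
  using assms by (simp add: divide_simps power2_eq_square)

lemma sum_inverse_square_shift_le:
  fixes \<gamma> :: real
  assumes "\<gamma> > 0"
  shows "(\<Sum>i=1..n. (1 / (\<gamma> + real i))\<^sup>2) \<le> 1 / \<gamma> - 1 / (\<gamma> + real n)"
proof (induction n)
  case 0
  then show ?case by simp
next
  case (Suc n)
  define a where "a = \<gamma> + real n"
  have "a > 0"
    using assms by (simp add: a_def)
  then have "(1 / (a + 1))\<^sup>2 \<le> 1 / (a * (a + 1))"
    by (simp add: power2_eq_square frac_le)
  also have "\<dots> = 1 / a - 1 / (a + 1)"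
    using \<open>a > 0\<close> by (simp add: field_simps)
  finally have "(1 / (a + 1))\<^sup>2 \<le> 1 / a - 1 / (a + 1)" .
  moreover have "(\<Sum>i=1..Suc n. (1 / (\<gamma> + real i))\<^sup>2)
      = (\<Sum>i=1..n. (1 / (\<gamma> + real i))\<^sup>2) + (1 / (a + 1))\<^sup>2"
    by (simp add: a_def algebra_simps)
  moreover have "1 / (\<gamma> + real (Suc n)) = 1 / (a + 1)"
    by (simp add: a_def algebra_simps)
  ultimately show ?case
    using Suc.IH unfolding a_def[symmetric] by linarith
qed

lemma sum_inverse_square_tail_le:
  fixes y :: real
  assumes "y \<ge> 1"
  shows "(\<Sum>i=1..n. if y \<le> real i then 1 / (real i)\<^sup>2 else 0) \<le> 2 / y"
proof -
  define f where "f i = (if y \<le> real i then 1 / (real i)\<^sup>2 else 0)" for i :: nat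
  have "sum f {1..n} \<le> (if y \<le> real n then 2 / y - 2 / (real n + 1) else 0)"
  proof (induction n)
    case 0
    show ?case using assms by simp
  next
    case (Suc n)
    define x where "x = real n + 1"
    have x: "real (Suc n) = x" "x \<ge> 1"
      by (simp_all add: x_def)
    have split: "sum f {1..Suc n} = sum f {1..n} + f (Suc n)"
      by simp
    have telescope: "1 / x\<^sup>2 \<le> 2 / x - 2 / (x + 1)"
      using x(2) by (rule inverse_square_le_telescope)
    show ?case
    proof (cases "y \<le> x")
      case True
      then have "f (Suc n) = 1 / x\<^sup>2"
        unfolding f_def x(1) by simp
      moreover have "sum f {1..n} \<le> 2 / y - 2 / x"
      proof (cases "y \<le> real n")
        case True
        then show ?thesis
          using Suc.IH by (simp add: x_def)
      next
        case False
        then have "sum f {1..n} = 0"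
          by (intro sum.neutral) (auto simp: f_def)
        moreover have "2 / x \<le> 2 / y"
          using \<open>y \<le> x\<close> assms by (simp add: frac_le)
        ultimately show ?thesis
          by simp
      qed
      ultimately have "sum f {1..Suc n} \<le> 2 / y - 2 / (x + 1)"
        using split telescope by linarith
      then show ?thesis
        unfolding x(1) using True by simp
    next
      case False
      then have "sum f {1..Suc n} = 0"
        by (intro sum.neutral) (auto simp: f_def x_def)
      then show ?thesis
        unfolding x(1) using False by simp
    qed
  qed
  also have "\<dots> \<le> 2 / y"
    using assms by simp
  finally show ?thesis
    by (simp add: f_def)
qed

lemma sum_indicator_less_le:
  fixes y :: real
  assumes "0 \<le> y"
  shows "(\<Sum>s=1..n. if real s < y then 1 else 0) \<le> y"
proof -
  have "(\<Sum>s=1..n. if real s < y then 1 else 0) \<le> min y (real n)"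
    using assms by (induction n) auto
  then show ?thesis by simp
qed

lemma sum_exceeded_levels_le:
  fixes K x :: real
  shows "(\<Sum>s=1..n. if max K (real s) < \<bar>x\<bar> then 1 else 0) \<le> (if K < \<bar>x\<bar> then \<bar>x\<bar> else 0)"
proof (cases "K < \<bar>x\<bar>")
  case True
  have "(\<Sum>s=1..n. if max K (real s) < \<bar>x\<bar> then 1 else 0) \<le> (\<Sum>s=1..n. if real s < \<bar>x\<bar> then 1 else (0::real))"
    by (intro sum_mono) auto
  also have "\<dots> \<le> \<bar>x\<bar>"
    using sum_indicator_less_le[of "\<bar>x\<bar>" n] by simp
  finally show ?thesis
    using True by simp
qed simp

lemma truncate_square_le:
  fixes K x :: real
  shows "(truncate (max K (real i)) x)\<^sup>2 \<le> K\<^sup>2 + (if K < \<bar>x\<bar> \<and> \<bar>x\<bar> \<le> real i then x\<^sup>2 else 0)"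
proof (cases "\<bar>x\<bar> \<le> K")
  case True
  then have "x\<^sup>2 \<le> K\<^sup>2"
    using power_mono[OF True abs_ge_zero, of 2] by simp
  then show ?thesis
    using True by (simp add: truncate_def)
qed (auto simp: truncate_def)

lemma sum_weighted_truncate_square_le:
  fixes \<gamma> K x :: real
  assumes "\<gamma> > 0" and "K \<ge> 1"
  shows "(\<Sum>i=1..n. (1 / (\<gamma> + real i))\<^sup>2 * (truncate (max K (real i)) x)\<^sup>2)
    \<le> K\<^sup>2 / \<gamma> + (if K < \<bar>x\<bar> then 2 * \<bar>x\<bar> else 0)"
proof -
  define tail where "tail i = (if \<bar>x\<bar> \<le> real i then 1 / (real i)\<^sup>2 else 0)" for i :: nat
  have termwise: "(1 / (\<gamma> + real i))\<^sup>2 * (truncate (max K (real i)) x)\<^sup>2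
      \<le> K\<^sup>2 * (1 / (\<gamma> + real i))\<^sup>2 + (if K < \<bar>x\<bar> then x\<^sup>2 * tail i else 0)"
    if "i \<ge> 1" for i
  proof -
    have "(1 / (\<gamma> + real i))\<^sup>2 \<le> (1 / real i)\<^sup>2"
      using that assms(1) by (intro power_mono) (auto simp: frac_le)
    from mult_right_mono[OF this, of "x\<^sup>2"]
    have "(1 / (\<gamma> + real i))\<^sup>2 * (if K < \<bar>x\<bar> \<and> \<bar>x\<bar> \<le> real i then x\<^sup>2 else 0)
        \<le> (if K < \<bar>x\<bar> then x\<^sup>2 * tail i else 0)"
      by (auto simp: tail_def power_one_over)
    moreover have "(1 / (\<gamma> + real i))\<^sup>2 * (truncate (max K (real i)) x)\<^sup>2
        \<le> (1 / (\<gamma> + real i))\<^sup>2 * (K\<^sup>2 + (if K < \<bar>x\<bar> \<and> \<bar>x\<bar> \<le> real i then x\<^sup>2 else 0))"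
      by (intro mult_left_mono truncate_square_le) simp
    ultimately show ?thesis
      by (simp add: algebra_simps)
  qed
  have "(\<Sum>i=1..n. (1 / (\<gamma> + real i))\<^sup>2 * (truncate (max K (real i)) x)\<^sup>2)
      \<le> (\<Sum>i=1..n. K\<^sup>2 * (1 / (\<gamma> + real i))\<^sup>2 + (if K < \<bar>x\<bar> then x\<^sup>2 * tail i else 0))"
    by (intro sum_mono termwise) simp
  also have "\<dots> = K\<^sup>2 * (\<Sum>i=1..n. (1 / (\<gamma> + real i))\<^sup>2) + (if K < \<bar>x\<bar> then x\<^sup>2 * sum tail {1..n} else 0)"
    by (simp add: sum.distrib sum_distrib_left)
  also have "\<dots> \<le> K\<^sup>2 / \<gamma> + (if K < \<bar>x\<bar> then 2 * \<bar>x\<bar> else 0)"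
  proof -
    have "0 \<le> 1 / (\<gamma> + real n)"
      using assms(1) by simp
    then have "(\<Sum>i=1..n. (1 / (\<gamma> + real i))\<^sup>2) \<le> 1 / \<gamma>"
      using sum_inverse_square_shift_le[OF assms(1), of n] by linarith
    then have "K\<^sup>2 * (\<Sum>i=1..n. (1 / (\<gamma> + real i))\<^sup>2) \<le> K\<^sup>2 / \<gamma>"
      using mult_left_mono[of _ "1 / \<gamma>" "K\<^sup>2"] by simp
    moreover have "x\<^sup>2 * sum tail {1..n} \<le> 2 * \<bar>x\<bar>" if "K < \<bar>x\<bar>"
    proof -
      have "x\<^sup>2 * sum tail {1..n} \<le> x\<^sup>2 * (2 / \<bar>x\<bar>)"
        using that assms(2) sum_inverse_square_tail_le[of "\<bar>x\<bar>" n]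
        by (intro mult_left_mono) (auto simp: tail_def)
      also have "\<dots> = 2 * \<bar>x\<bar>"
        using that assms(2) by (simp add: power2_eq_square field_simps)
      finally show ?thesis .
    qed
    ultimately show ?thesis
      by auto
  qed
  finally show ?thesis .
qed

lemma (in finite_measure) integrable_bounded_real:
  fixes f :: "'a \<Rightarrow> real"
  assumes "f \<in> borel_measurable M" and "\<And>\<omega>. \<omega> \<in> space M \<Longrightarrow> \<bar>f \<omega>\<bar> \<le> C"
  shows "integrable M f"
  by (rule integrable_const_bound[where B=C]) (auto intro!: AE_I2 assms)

lemma (in prob_space) expectation_prefix_mult_indep_eq_0:
  fixes Y :: "nat \<Rightarrow> 'a \<Rightarrow> real"
  assumes indep: "indep_vars (\<lambda>_. borel) Y {1..}"
    and G: "G \<in> borel_measurable (PiM {1..n} (\<lambda>_. borel))"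
    and "integrable M (\<lambda>\<omega>. G (\<lambda>i\<in>{1..n}. Y i \<omega>))"
    and "integrable M (Y (Suc n))"
    and "expectation (Y (Suc n)) = 0"
  shows "expectation (\<lambda>\<omega>. G (\<lambda>i\<in>{1..n}. Y i \<omega>) * Y (Suc n) \<omega>) = 0"
proof -
  have "indep_var (PiM {1..n} (\<lambda>_. borel)) (\<lambda>\<omega>. \<lambda>i\<in>{1..n}. Y i \<omega>)
      (PiM {Suc n} (\<lambda>_. borel)) (\<lambda>\<omega>. \<lambda>i\<in>{Suc n}. Y i \<omega>)"
    by (rule indep_var_restrict[OF indep]) auto
  then have "indep_var borel (G \<circ> (\<lambda>\<omega>. \<lambda>i\<in>{1..n}. Y i \<omega>))
      borel ((\<lambda>f. f (Suc n)) \<circ> (\<lambda>\<omega>. \<lambda>i\<in>{Suc n}. Y i \<omega>))"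
    by (rule indep_var_compose[OF _ G]) measurable
  then have "indep_var borel (\<lambda>\<omega>. G (\<lambda>i\<in>{1..n}. Y i \<omega>)) borel (Y (Suc n))"
    by (simp add: comp_def)
  from indep_var_lebesgue_integral[OF this assms(3,4)] assms(5) show ?thesis
    by simp
qed

locale hajek_renyi_setting = prob_space +
  fixes Y :: "nat \<Rightarrow> 'a \<Rightarrow> real" and B c :: "nat \<Rightarrow> real" and \<epsilon> :: real
  assumes indep: "indep_vars (\<lambda>_. borel) Y {1..}"
    and measurable_Y [measurable]: "\<And>i. Y i \<in> borel_measurable M"
    and bounded: "\<And>i \<omega>. \<omega> \<in> space M \<Longrightarrow> \<bar>Y i \<omega>\<bar> \<le> B i"
    and centred: "\<And>i. i \<ge> 1 \<Longrightarrow> expectation (Y i) = 0"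
    and weight_nonneg: "\<And>i. 0 \<le> c (Suc i)"
    and weight_decreasing: "\<And>i. c (Suc i) \<le> c i"
    and eps_pos: "\<epsilon> > 0"
begin

definition survivors :: "nat \<Rightarrow> 'a set" where
  "survivors n = {\<omega> \<in> space M. \<forall>k\<in>{1..n}. c k * \<bar>\<Sum>s=1..k. Y s \<omega>\<bar> < \<epsilon>}"

lemma survivors_sets [measurable]: "survivors n \<in> sets M"
  unfolding survivors_def by measurable

lemma survivors_Suc: "survivors (Suc n) \<subseteq> survivors n"
  by (auto simp: survivors_def)

lemma abs_partial_sum_le: "\<omega> \<in> space M \<Longrightarrow> \<bar>\<Sum>s=1..k. Y s \<omega>\<bar> \<le> (\<Sum>s=1..k. B s)"
  using bounded by (intro order_trans[OF sum_abs] sum_mono) auto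

lemma partial_sum_square_le: "\<omega> \<in> space M \<Longrightarrow> (\<Sum>s=1..k. Y s \<omega>)\<^sup>2 \<le> (\<Sum>s=1..k. B s)\<^sup>2"
  using power_mono[OF abs_partial_sum_le abs_ge_zero, of _ k 2] by simp

lemma integrable_partial_sum_square:
  "integrable M (\<lambda>\<omega>. (\<Sum>s=1..k. Y s \<omega>)\<^sup>2 * indicator A \<omega>)" if [measurable]: "A \<in> sets M"
  using partial_sum_square_le
  by (intro integrable_bounded_real[where C="(\<Sum>s=1..k. B s)\<^sup>2"]) (auto simp: indicator_def)

lemma integrable_square: "integrable M (\<lambda>\<omega>. (Y k \<omega>)\<^sup>2)"
  using power_mono[OF bounded abs_ge_zero, of _ k 2]
  by (intro integrable_bounded_real[where C="(B k)\<^sup>2"]) auto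

lemma expectation_cross_term_eq_0:
  "expectation (\<lambda>\<omega>. ((\<Sum>s=1..n. Y s \<omega>) * indicator (survivors n) \<omega>) * Y (Suc n) \<omega>) = 0"
proof -
  define G where
    "G y = (\<Sum>s=1..n. y s) * (if \<forall>k\<in>{1..n}. c k * \<bar>\<Sum>s=1..k. y s\<bar> < \<epsilon> then 1 else 0)"
    for y :: "nat \<Rightarrow> real"
  have G_measurable: "G \<in> borel_measurable (PiM {1..n} (\<lambda>_. borel))"
    unfolding G_def by measurable
  have G_eq: "G (\<lambda>i\<in>{1..n}. Y i \<omega>) = (\<Sum>s=1..n. Y s \<omega>) * indicator (survivors n) \<omega>"
    if "\<omega> \<in> space M" for \<omega>
    using that by (auto simp: G_def survivors_def indicator_def)
  have "integrable M (\<lambda>\<omega>. G (\<lambda>i\<in>{1..n}. Y i \<omega>))"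
  proof (rule integrable_bounded_real[where C="\<Sum>s=1..n. B s"])
    show "(\<lambda>\<omega>. G (\<lambda>i\<in>{1..n}. Y i \<omega>)) \<in> borel_measurable M"
      by (rule measurable_compose[OF _ G_measurable]) measurable
    show "\<bar>G (\<lambda>i\<in>{1..n}. Y i \<omega>)\<bar> \<le> (\<Sum>s=1..n. B s)" if "\<omega> \<in> space M" for \<omega>
      unfolding G_eq[OF that] using abs_partial_sum_le[OF that, of n] by (auto simp: indicator_def)
  qed
  moreover have "integrable M (Y (Suc n))"
    using bounded by (intro integrable_bounded_real) auto
  ultimately have "expectation (\<lambda>\<omega>. G (\<lambda>i\<in>{1..n}. Y i \<omega>) * Y (Suc n) \<omega>) = 0"
    using centred by (intro expectation_prefix_mult_indep_eq_0[OF indep G_measurable]) auto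
  moreover have "expectation (\<lambda>\<omega>. G (\<lambda>i\<in>{1..n}. Y i \<omega>) * Y (Suc n) \<omega>)
      = expectation (\<lambda>\<omega>. ((\<Sum>s=1..n. Y s \<omega>) * indicator (survivors n) \<omega>) * Y (Suc n) \<omega>)"
    by (intro Bochner_Integration.integral_cong refl) (simp only: G_eq)
  ultimately show ?thesis
    by simp
qed

lemma expectation_square_step:
  "expectation (\<lambda>\<omega>. (\<Sum>s=1..Suc n. Y s \<omega>)\<^sup>2 * indicator (survivors n) \<omega>)
    \<le> expectation (\<lambda>\<omega>. (\<Sum>s=1..n. Y s \<omega>)\<^sup>2 * indicator (survivors n) \<omega>)
      + expectation (\<lambda>\<omega>. (Y (Suc n) \<omega>)\<^sup>2)"
proof -
  define S where "S \<omega> = (\<Sum>s=1..n. Y s \<omega>)" for \<omega>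
  define I where "I = (indicator (survivors n) :: 'a \<Rightarrow> real)"
  have [measurable]: "S \<in> borel_measurable M" "I \<in> borel_measurable M"
    unfolding S_def I_def by measurable
  have int_S: "integrable M (\<lambda>\<omega>. (S \<omega>)\<^sup>2 * I \<omega>)"
    unfolding S_def I_def by (rule integrable_partial_sum_square) simp
  have int_cross: "integrable M (\<lambda>\<omega>. (S \<omega> * I \<omega>) * Y (Suc n) \<omega>)"
  proof (rule integrable_bounded_real[where C="(\<Sum>s=1..n. B s) * B (Suc n)"])
    fix \<omega> assume \<omega>: "\<omega> \<in> space M"
    have "\<bar>(S \<omega> * I \<omega>) * Y (Suc n) \<omega>\<bar> \<le> \<bar>S \<omega>\<bar> * \<bar>Y (Suc n) \<omega>\<bar>"
      by (auto simp: I_def indicator_def abs_mult)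
    also have "\<dots> \<le> (\<Sum>s=1..n. B s) * B (Suc n)"
      using abs_partial_sum_le[OF \<omega>, of n] bounded[OF \<omega>, of "Suc n"]
      by (intro mult_mono) (auto simp: S_def)
    finally show "\<bar>(S \<omega> * I \<omega>) * Y (Suc n) \<omega>\<bar> \<le> (\<Sum>s=1..n. B s) * B (Suc n)" .
  qed measurable
  have int_Y: "integrable M (\<lambda>\<omega>. (Y (Suc n) \<omega>)\<^sup>2 * I \<omega>)"
    by (rule Bochner_Integration.integrable_bound[OF integrable_square]) (auto simp: I_def indicator_def)
  have "expectation (\<lambda>\<omega>. (\<Sum>s=1..Suc n. Y s \<omega>)\<^sup>2 * indicator (survivors n) \<omega>)
      = expectation (\<lambda>\<omega>. (S \<omega>)\<^sup>2 * I \<omega> + 2 * ((S \<omega> * I \<omega>) * Y (Suc n) \<omega>) + (Y (Suc n) \<omega>)\<^sup>2 * I \<omega>)"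
    by (intro Bochner_Integration.integral_cong)
      (auto simp: S_def I_def indicator_def power2_eq_square algebra_simps)
  also have "\<dots> = expectation (\<lambda>\<omega>. (S \<omega>)\<^sup>2 * I \<omega>) + expectation (\<lambda>\<omega>. (Y (Suc n) \<omega>)\<^sup>2 * I \<omega>)"
    using int_S int_cross int_Y expectation_cross_term_eq_0 by (simp add: S_def I_def)
  also have "\<dots> \<le> expectation (\<lambda>\<omega>. (S \<omega>)\<^sup>2 * I \<omega>) + expectation (\<lambda>\<omega>. (Y (Suc n) \<omega>)\<^sup>2)"
    using int_Y integrable_square by (auto simp: I_def indicator_def intro!: integral_mono)
  finally show ?thesis
    by (simp add: S_def I_def)
qed

lemma survivors_diff_Suc:
  "survivors n - survivors (Suc n) = {\<omega> \<in> survivors n. \<epsilon> \<le> c (Suc n) * \<bar>\<Sum>s=1..Suc n. Y s \<omega>\<bar>}"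
proof -
  have "{1..Suc n} = insert (Suc n) {1..n}"
    by auto
  then show ?thesis
    unfolding survivors_def by (auto simp: not_less simp del: sum.cl_ivl_Suc)
qed

lemma first_crossing_le:
  "\<epsilon>\<^sup>2 * indicator (survivors n - survivors (Suc n)) \<omega>
      + (c (Suc n))\<^sup>2 * ((\<Sum>s=1..Suc n. Y s \<omega>)\<^sup>2 * indicator (survivors (Suc n)) \<omega>)
    \<le> (c (Suc n))\<^sup>2 * ((\<Sum>s=1..Suc n. Y s \<omega>)\<^sup>2 * indicator (survivors n) \<omega>)"
proof (cases "\<omega> \<in> survivors n - survivors (Suc n)")
  case True
  then have "\<epsilon>\<^sup>2 \<le> (c (Suc n) * \<bar>\<Sum>s=1..Suc n. Y s \<omega>\<bar>)\<^sup>2"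
    using eps_pos by (intro power_mono) (auto simp: survivors_diff_Suc)
  with True show ?thesis
    by (simp add: power_mult_distrib)
next
  case False
  then show ?thesis
    using survivors_Suc by (auto simp: indicator_def)
qed

text \<open>Kolmogorov's stopping argument: a path crossing the barrier for the first time at \<open>n + 1\<close>
  has weighted square at least \<open>\<epsilon>\<^sup>2\<close> there, while on the survivors the expected square of the
  partial sum grows by at most \<open>E (Y (n + 1))\<^sup>2\<close>.\<close>

lemma hajek_renyi_step:
  "\<epsilon>\<^sup>2 * prob (survivors n - survivors (Suc n))
      + (c (Suc n))\<^sup>2 * expectation (\<lambda>\<omega>. (\<Sum>s=1..Suc n. Y s \<omega>)\<^sup>2 * indicator (survivors (Suc n)) \<omega>)
    \<le> (c n)\<^sup>2 * expectation (\<lambda>\<omega>. (\<Sum>s=1..n. Y s \<omega>)\<^sup>2 * indicator (survivors n) \<omega>)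
      + (c (Suc n))\<^sup>2 * expectation (\<lambda>\<omega>. (Y (Suc n) \<omega>)\<^sup>2)"
proof -
  define c' where "c' = c (Suc n)"
  define E where "E k = expectation (\<lambda>\<omega>. (\<Sum>s=1..Suc n. Y s \<omega>)\<^sup>2 * indicator (survivors k) \<omega>)" for k
  have "\<epsilon>\<^sup>2 * prob (survivors n - survivors (Suc n)) + c'\<^sup>2 * E (Suc n)
      = expectation (\<lambda>\<omega>. \<epsilon>\<^sup>2 * indicator (survivors n - survivors (Suc n)) \<omega>
          + c'\<^sup>2 * ((\<Sum>s=1..Suc n. Y s \<omega>)\<^sup>2 * indicator (survivors (Suc n)) \<omega>))"
    using integrable_partial_sum_square[of "survivors (Suc n)" "Suc n"]
      sets.sets_into_space[OF survivors_sets, of n]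
    by (subst Bochner_Integration.integral_add)
      (auto simp: E_def Int_absorb2 less_top[symmetric] intro!: integrable_real_indicator)
  also have "\<dots> \<le> expectation (\<lambda>\<omega>. c'\<^sup>2 * ((\<Sum>s=1..Suc n. Y s \<omega>)\<^sup>2 * indicator (survivors n) \<omega>))"
    using integrable_partial_sum_square[of "survivors (Suc n)" "Suc n"]
      integrable_partial_sum_square[of "survivors n" "Suc n"]
    unfolding c'_def
    by (intro integral_mono first_crossing_le Bochner_Integration.integrable_add
        integrable_mult_right integrable_real_indicator) (auto simp: less_top[symmetric])
  also have "\<dots> = c'\<^sup>2 * E n"
    by (simp add: E_def)
  also have "\<dots> \<le> c'\<^sup>2 * (expectation (\<lambda>\<omega>. (\<Sum>s=1..n. Y s \<omega>)\<^sup>2 * indicator (survivors n) \<omega>)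
      + expectation (\<lambda>\<omega>. (Y (Suc n) \<omega>)\<^sup>2))"
    unfolding E_def by (rule mult_left_mono[OF expectation_square_step]) simp
  also have "\<dots> \<le> (c n)\<^sup>2 * expectation (\<lambda>\<omega>. (\<Sum>s=1..n. Y s \<omega>)\<^sup>2 * indicator (survivors n) \<omega>)
      + c'\<^sup>2 * expectation (\<lambda>\<omega>. (Y (Suc n) \<omega>)\<^sup>2)"
  proof -
    have "c'\<^sup>2 \<le> (c n)\<^sup>2"
      unfolding c'_def by (intro power_mono weight_decreasing weight_nonneg)
    moreover have "0 \<le> expectation (\<lambda>\<omega>. (\<Sum>s=1..n. Y s \<omega>)\<^sup>2 * indicator (survivors n) \<omega>)"
      by (intro integral_nonneg_AE) auto
    ultimately show ?thesis
      by (simp add: distrib_left mult_right_mono)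
  qed
  finally show ?thesis
    unfolding E_def c'_def .
qed

lemma hajek_renyi_invariant:
  "\<epsilon>\<^sup>2 * prob (space M - survivors n)
      + (c n)\<^sup>2 * expectation (\<lambda>\<omega>. (\<Sum>s=1..n. Y s \<omega>)\<^sup>2 * indicator (survivors n) \<omega>)
    \<le> (\<Sum>i=1..n. (c i)\<^sup>2 * expectation (\<lambda>\<omega>. (Y i \<omega>)\<^sup>2))"
proof (induction n)
  case 0
  have "survivors 0 = space M"
    by (simp add: survivors_def)
  then show ?case
    by simp
next
  case (Suc n)
  have "space M - survivors (Suc n) = (space M - survivors n) \<union> (survivors n - survivors (Suc n))"
    using survivors_Suc sets.sets_into_space[OF survivors_sets] by blast
  then have "prob (space M - survivors (Suc n))
      = prob (space M - survivors n) + prob (survivors n - survivors (Suc n))"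
    by (auto intro: finite_measure_Union)
  then have "\<epsilon>\<^sup>2 * prob (space M - survivors (Suc n))
      = \<epsilon>\<^sup>2 * prob (space M - survivors n) + \<epsilon>\<^sup>2 * prob (survivors n - survivors (Suc n))"
    by (simp add: distrib_left)
  moreover have "(\<Sum>i=1..Suc n. (c i)\<^sup>2 * expectation (\<lambda>\<omega>. (Y i \<omega>)\<^sup>2))
      = (\<Sum>i=1..n. (c i)\<^sup>2 * expectation (\<lambda>\<omega>. (Y i \<omega>)\<^sup>2))
        + (c (Suc n))\<^sup>2 * expectation (\<lambda>\<omega>. (Y (Suc n) \<omega>)\<^sup>2)"
    by simp
  ultimately show ?case
    using Suc.IH hajek_renyi_step[of n] by linarith
qed

lemma hajek_renyi_inequality:
  "\<epsilon>\<^sup>2 * prob {\<omega> \<in> space M. \<exists>k\<in>{1..n}. \<epsilon> \<le> c k * \<bar>\<Sum>s=1..k. Y s \<omega>\<bar>}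
    \<le> (\<Sum>i=1..n. (c i)\<^sup>2 * expectation (\<lambda>\<omega>. (Y i \<omega>)\<^sup>2))"
proof -
  have exceed_eq: "{\<omega> \<in> space M. \<exists>k\<in>{1..n}. \<epsilon> \<le> c k * \<bar>\<Sum>s=1..k. Y s \<omega>\<bar>} = space M - survivors n"
    by (auto simp: survivors_def not_less)
  have "0 \<le> (c n)\<^sup>2 * expectation (\<lambda>\<omega>. (\<Sum>s=1..n. Y s \<omega>)\<^sup>2 * indicator (survivors n) \<omega>)"
    by (intro mult_nonneg_nonneg integral_nonneg_AE) auto
  then show ?thesis
    unfolding exceed_eq using hajek_renyi_invariant[of n] by linarith
qed

end

lemma tail_mass_nonneg: "0 \<le> tail_mass M Z K"
  unfolding tail_mass_def by (rule integral_nonneg_AE) auto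

lemma integrable_tail:
  fixes Z :: "'a \<Rightarrow> real"
  assumes "integrable M Z"
  shows "integrable M (\<lambda>\<omega>. \<bar>Z \<omega>\<bar> * indicator {\<omega>. K < \<bar>Z \<omega>\<bar>} \<omega>)"
proof -
  have [measurable]: "Z \<in> borel_measurable M"
    using assms by (rule borel_measurable_integrable)
  show ?thesis
    by (rule Bochner_Integration.integrable_bound[OF integrable_abs[OF assms]])
      (auto simp: indicator_def)
qed

lemma (in prob_space) abs_expectation_truncate_le_tail_mass:
  assumes "integrable M Z" and "expectation Z = 0" and "K \<le> L"
  shows "\<bar>expectation (\<lambda>\<omega>. truncate L (Z \<omega>))\<bar> \<le> tail_mass M Z K"
proof -
  have [measurable]: "Z \<in> borel_measurable M"
    using assms(1) by (rule borel_measurable_integrable)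
  define q where "q \<omega> = Z \<omega> - truncate L (Z \<omega>)" for \<omega>
  have integrable_truncate: "integrable M (\<lambda>\<omega>. truncate L (Z \<omega>))"
    by (rule Bochner_Integration.integrable_bound[OF integrable_abs[OF assms(1)]])
      (auto simp: truncate_def)
  then have "integrable M q"
    unfolding q_def using assms(1) by simp
  have "expectation (\<lambda>\<omega>. truncate L (Z \<omega>)) = - expectation q"
    unfolding q_def using assms(1,2) integrable_truncate by simp
  then have "\<bar>expectation (\<lambda>\<omega>. truncate L (Z \<omega>))\<bar> \<le> expectation (\<lambda>\<omega>. \<bar>q \<omega>\<bar>)"
    by (simp add: integral_abs_bound)
  also have "\<dots> \<le> tail_mass M Z K"
    unfolding tail_mass_def using integrable_abs[OF \<open>integrable M q\<close>] integrable_tail[OF assms(1)] assms(3)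
    by (intro integral_mono) (auto simp: q_def truncate_def indicator_def)
  finally show ?thesis .
qed

locale centred_iid = prob_space +
  fixes X :: "nat \<Rightarrow> 'a \<Rightarrow> real"
  assumes measurable_X [measurable]: "\<And>t. X t \<in> borel_measurable M"
    and indep_X: "indep_vars (\<lambda>_. borel) X {1..}"
    and ident_X: "\<And>t. t \<ge> 1 \<Longrightarrow> distr M borel (X t) = distr M borel (X 1)"
    and integrable_X: "integrable M (X 1)"
    and mean_X: "expectation (X 1) = 0"
begin

lemma expectation_comp_ident:
  fixes f :: "real \<Rightarrow> real"
  assumes "t \<ge> 1" and [measurable]: "f \<in> borel_measurable borel"
  shows "expectation (\<lambda>\<omega>. f (X t \<omega>)) = expectation (\<lambda>\<omega>. f (X 1 \<omega>))"
proof -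
  have "expectation (\<lambda>\<omega>. f (X t \<omega>)) = integral\<^sup>L (distr M borel (X t)) f"
    by (rule integral_distr[symmetric]) measurable
  also have "\<dots> = integral\<^sup>L (distr M borel (X 1)) f"
    using ident_X[OF assms(1)] by simp
  also have "\<dots> = expectation (\<lambda>\<omega>. f (X 1 \<omega>))"
    by (rule integral_distr) measurable
  finally show ?thesis .
qed

definition centred_truncation :: "real \<Rightarrow> nat \<Rightarrow> 'a \<Rightarrow> real" where
  "centred_truncation K s \<omega> =
    truncate (max K (real s)) (X s \<omega>) - expectation (\<lambda>\<omega>. truncate (max K (real s)) (X 1 \<omega>))"

lemma centred_truncation_measurable [measurable]: "centred_truncation K s \<in> borel_measurable M"
  unfolding centred_truncation_def by measurable

lemma integrable_truncate_X: "integrable M (\<lambda>\<omega>. f (truncate L (X t \<omega>)))"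
  if [measurable]: "f \<in> borel_measurable borel" and "\<And>x. \<bar>x\<bar> \<le> \<bar>L\<bar> \<Longrightarrow> \<bar>f x\<bar> \<le> C"
  for f :: "real \<Rightarrow> real" and L C :: real and t :: nat
  using that(2)
  by (intro integrable_bounded_real[where C=C]) (auto simp: truncate_def)

lemma abs_centred_truncation_le:
  assumes "K \<ge> 0"
  shows "\<bar>centred_truncation K s \<omega>\<bar> \<le> max K (real s) + tail_mass M (X 1) K"
  using abs_truncate_le[of "max K (real s)" "X s \<omega>"] assms
    abs_expectation_truncate_le_tail_mass[OF integrable_X mean_X, of K "max K (real s)"]
  unfolding centred_truncation_def by linarith

lemma indep_centred_truncation: "indep_vars (\<lambda>_. borel) (centred_truncation K) {1..}"
  unfolding centred_truncation_def by (rule indep_vars_compose2[OF indep_X]) measurable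

lemma expectation_centred_truncation:
  assumes "s \<ge> 1"
  shows "expectation (centred_truncation K s) = 0"
  using expectation_comp_ident[OF assms, of "truncate (max K (real s))"]
    integrable_truncate_X[where f="\<lambda>x. x" and L="max K (real s)" and t=s and C="\<bar>max K (real s)\<bar>"]
  unfolding centred_truncation_def by (simp add: prob_space)

lemma second_moment_centred_truncation_le:
  assumes "s \<ge> 1"
  shows "expectation (\<lambda>\<omega>. (centred_truncation K s \<omega>)\<^sup>2)
    \<le> expectation (\<lambda>\<omega>. (truncate (max K (real s)) (X 1 \<omega>))\<^sup>2)"
proof -
  define T where "T \<omega> = truncate (max K (real s)) (X s \<omega>)" for \<omega>
  have integrable_T: "integrable M T"
    unfolding T_def by (rule integrable_truncate_X[where f="\<lambda>x. x"]) simp_all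
  have integrable_T2: "integrable M (\<lambda>\<omega>. (T \<omega>)\<^sup>2)"
    unfolding T_def by (rule integrable_truncate_X[where f="\<lambda>x. x\<^sup>2" and C="(max K (real s))\<^sup>2"])
      (simp_all add: abs_le_square_iff[symmetric])
  have mean: "expectation (\<lambda>\<omega>. truncate (max K (real s)) (X 1 \<omega>)) = expectation T"
    unfolding T_def by (rule expectation_comp_ident[OF assms, symmetric]) measurable
  have "expectation (\<lambda>\<omega>. (centred_truncation K s \<omega>)\<^sup>2)
      = expectation (\<lambda>\<omega>. (T \<omega>)\<^sup>2) - (expectation T)\<^sup>2"
    unfolding centred_truncation_def T_def[symmetric] mean
    by (rule variance_eq[OF integrable_T integrable_T2])
  also have "\<dots> \<le> expectation (\<lambda>\<omega>. (T \<omega>)\<^sup>2)"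
    by simp
  also have "\<dots> = expectation (\<lambda>\<omega>. (truncate (max K (real s)) (X 1 \<omega>))\<^sup>2)"
    unfolding T_def by (rule expectation_comp_ident[OF assms]) measurable
  finally show ?thesis .
qed

lemma weighted_second_moments_le:
  assumes "\<gamma> > 0" and "K \<ge> 1"
  shows "(\<Sum>i=1..n. (1 / (\<gamma> + real i))\<^sup>2 * expectation (\<lambda>\<omega>. (centred_truncation K i \<omega>)\<^sup>2))
    \<le> K\<^sup>2 / \<gamma> + 2 * tail_mass M (X 1) K"
proof -
  have integrable_square: "integrable M (\<lambda>\<omega>. (truncate (max K (real i)) (X 1 \<omega>))\<^sup>2)" for i
    by (rule integrable_truncate_X[where C="(max K (real i))\<^sup>2"])
      (simp_all add: abs_le_square_iff[symmetric])
  have "(\<Sum>i=1..n. (1 / (\<gamma> + real i))\<^sup>2 * expectation (\<lambda>\<omega>. (centred_truncation K i \<omega>)\<^sup>2))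
      \<le> (\<Sum>i=1..n. (1 / (\<gamma> + real i))\<^sup>2 * expectation (\<lambda>\<omega>. (truncate (max K (real i)) (X 1 \<omega>))\<^sup>2))"
    by (intro sum_mono mult_left_mono second_moment_centred_truncation_le) auto
  also have "\<dots> = expectation (\<lambda>\<omega>. \<Sum>i=1..n. (1 / (\<gamma> + real i))\<^sup>2 * (truncate (max K (real i)) (X 1 \<omega>))\<^sup>2)"
    using integrable_square by (simp add: Bochner_Integration.integral_sum)
  also have "\<dots> \<le> expectation (\<lambda>\<omega>. K\<^sup>2 / \<gamma> + 2 * (\<bar>X 1 \<omega>\<bar> * indicator {\<omega>. K < \<bar>X 1 \<omega>\<bar>} \<omega>))"
  proof (rule integral_mono)
    fix \<omega>
    show "(\<Sum>i=1..n. (1 / (\<gamma> + real i))\<^sup>2 * (truncate (max K (real i)) (X 1 \<omega>))\<^sup>2)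
        \<le> K\<^sup>2 / \<gamma> + 2 * (\<bar>X 1 \<omega>\<bar> * indicator {\<omega>. K < \<bar>X 1 \<omega>\<bar>} \<omega>)"
      using sum_weighted_truncate_square_le[OF assms, where n=n and x="X 1 \<omega>"]
      by (auto simp: indicator_def)
  qed (use integrable_square integrable_tail[OF integrable_X] in auto)
  also have "\<dots> = K\<^sup>2 / \<gamma> + 2 * tail_mass M (X 1) K"
    using integrable_tail[OF integrable_X] by (simp add: tail_mass_def prob_space)
  finally show ?thesis .
qed

lemma prob_exceeded_level_le:
  "prob {\<omega> \<in> space M. \<exists>s\<in>{1..n}. max K (real s) < \<bar>X s \<omega>\<bar>} \<le> tail_mass M (X 1) K"
proof -
  define exceeds where "exceeds s x = (if max K (real s) < \<bar>x\<bar> then 1 else 0 :: real)" for s x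
  have [measurable]: "exceeds s \<in> borel_measurable borel" for s
    unfolding exceeds_def by measurable
  have integrable_exceeds: "integrable M (\<lambda>\<omega>. exceeds s (X 1 \<omega>))" for s
    by (rule integrable_bounded_real[where C=1]) (auto simp: exceeds_def)
  have prob_eq: "prob {\<omega> \<in> space M. max K (real s) < \<bar>X s \<omega>\<bar>} = expectation (\<lambda>\<omega>. exceeds s (X 1 \<omega>))"
    if "s \<ge> 1" for s
  proof -
    define A where "A = {\<omega> \<in> space M. max K (real s) < \<bar>X s \<omega>\<bar>}"
    have "prob A = expectation (indicator A :: 'a \<Rightarrow> real)"
      by (simp add: A_def Int_absorb2)
    also have "\<dots> = expectation (\<lambda>\<omega>. exceeds s (X s \<omega>))"
      by (intro Bochner_Integration.integral_cong) (auto simp: A_def exceeds_def indicator_def)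
    also have "\<dots> = expectation (\<lambda>\<omega>. exceeds s (X 1 \<omega>))"
      by (rule expectation_comp_ident[OF that]) measurable
    finally show ?thesis
      unfolding A_def .
  qed
  have "{\<omega> \<in> space M. \<exists>s\<in>{1..n}. max K (real s) < \<bar>X s \<omega>\<bar>}
      = (\<Union>s\<in>{1..n}. {\<omega> \<in> space M. max K (real s) < \<bar>X s \<omega>\<bar>})"
    by auto
  then have "prob {\<omega> \<in> space M. \<exists>s\<in>{1..n}. max K (real s) < \<bar>X s \<omega>\<bar>}
      \<le> (\<Sum>s=1..n. prob {\<omega> \<in> space M. max K (real s) < \<bar>X s \<omega>\<bar>})"
    by (auto intro!: finite_measure_subadditive_finite)
  also have "\<dots> = expectation (\<lambda>\<omega>. \<Sum>s=1..n. exceeds s (X 1 \<omega>))"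
    using prob_eq integrable_exceeds by (simp add: Bochner_Integration.integral_sum)
  also have "\<dots> \<le> expectation (\<lambda>\<omega>. \<bar>X 1 \<omega>\<bar> * indicator {\<omega>. K < \<bar>X 1 \<omega>\<bar>} \<omega>)"
  proof (rule integral_mono)
    fix \<omega>
    show "(\<Sum>s=1..n. exceeds s (X 1 \<omega>)) \<le> \<bar>X 1 \<omega>\<bar> * indicator {\<omega>. K < \<bar>X 1 \<omega>\<bar>} \<omega>"
    proof -
      have "\<bar>X 1 \<omega>\<bar> * indicator {\<omega>. K < \<bar>X 1 \<omega>\<bar>} \<omega> = (if K < \<bar>X 1 \<omega>\<bar> then \<bar>X 1 \<omega>\<bar> else 0)"
        by (simp add: indicator_def)
      then show ?thesis
        unfolding exceeds_def by (simp only: sum_exceeded_levels_le)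
    qed
  qed (use integrable_exceeds integrable_tail[OF integrable_X] in auto)
  finally show ?thesis
    by (simp add: tail_mass_def)
qed

lemma abs_partial_sum_le_centred_truncation:
  assumes "K \<ge> 0" and "\<And>s. s \<in> {1..t} \<Longrightarrow> \<bar>X s \<omega>\<bar> \<le> max K (real s)"
  shows "\<bar>\<Sum>s=1..t. X s \<omega>\<bar> \<le> \<bar>\<Sum>s=1..t. centred_truncation K s \<omega>\<bar> + real t * tail_mass M (X 1) K"
proof -
  define m where "m s = expectation (\<lambda>\<omega>. truncate (max K (real s)) (X 1 \<omega>))" for s
  have "X s \<omega> = centred_truncation K s \<omega> + m s" if "s \<in> {1..t}" for s
    using assms(2)[OF that] by (simp add: centred_truncation_def truncate_def m_def)
  then have "(\<Sum>s=1..t. X s \<omega>) = (\<Sum>s=1..t. centred_truncation K s \<omega>) + (\<Sum>s=1..t. m s)"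
    by (simp add: sum.distrib)
  moreover have "\<bar>\<Sum>s=1..t. m s\<bar> \<le> (\<Sum>s=1..t. tail_mass M (X 1) K)"
    unfolding m_def using abs_expectation_truncate_le_tail_mass[OF integrable_X mean_X]
    by (intro order_trans[OF sum_abs] sum_mono) simp
  ultimately show ?thesis
    by simp
qed

lemma prob_partial_sums_exceed_le:
  assumes "\<epsilon> > 0" and "\<gamma> > 0" and "K \<ge> 1"
  shows "prob {\<omega> \<in> space M. \<exists>t\<in>{1..n}.
      \<epsilon> + tail_mass M (X 1) K < \<bar>\<Sum>s=1..t. X s \<omega>\<bar> / (\<gamma> + real t)}
    \<le> tail_mass M (X 1) K + (K\<^sup>2 / \<gamma> + 2 * tail_mass M (X 1) K) / \<epsilon>\<^sup>2"
proof -
  define r where "r = tail_mass M (X 1) K"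
  define Y where "Y = centred_truncation K"
  define exceeded where "exceeded = {\<omega> \<in> space M. \<exists>s\<in>{1..n}. max K (real s) < \<bar>X s \<omega>\<bar>}"
  define crossed where
    "crossed = {\<omega> \<in> space M. \<exists>t\<in>{1..n}. \<epsilon> \<le> 1 / (\<gamma> + real t) * \<bar>\<Sum>s=1..t. Y s \<omega>\<bar>}"
  interpret hajek_renyi_setting M Y "\<lambda>s. max K (real s) + r" "\<lambda>t. 1 / (\<gamma> + real t)" \<epsilon>
    using assms indep_centred_truncation expectation_centred_truncation abs_centred_truncation_le
    by unfold_locales (auto simp: Y_def r_def frac_le)
  have "\<epsilon>\<^sup>2 * prob crossed \<le> K\<^sup>2 / \<gamma> + 2 * r"
    using hajek_renyi_inequality[of n] weighted_second_moments_le[OF assms(2,3), of n]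
    unfolding crossed_def Y_def r_def by linarith
  then have prob_crossed: "prob crossed \<le> (K\<^sup>2 / \<gamma> + 2 * r) / \<epsilon>\<^sup>2"
    using assms(1) by (simp add: field_simps)
  have "{\<omega> \<in> space M. \<exists>t\<in>{1..n}. \<epsilon> + r < \<bar>\<Sum>s=1..t. X s \<omega>\<bar> / (\<gamma> + real t)}
      \<subseteq> exceeded \<union> crossed"
  proof
    fix \<omega>
    assume "\<omega> \<in> {\<omega> \<in> space M. \<exists>t\<in>{1..n}. \<epsilon> + r < \<bar>\<Sum>s=1..t. X s \<omega>\<bar> / (\<gamma> + real t)}"
    then obtain t where \<omega>: "\<omega> \<in> space M" and t: "t \<in> {1..n}"
      and big: "\<epsilon> + r < \<bar>\<Sum>s=1..t. X s \<omega>\<bar> / (\<gamma> + real t)"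
      by blast
    show "\<omega> \<in> exceeded \<union> crossed"
    proof (cases "\<omega> \<in> exceeded")
      case False
      then have "\<bar>X s \<omega>\<bar> \<le> max K (real s)" if "s \<in> {1..t}" for s
        using that t \<omega> by (auto simp: exceeded_def not_less le_max_iff_disj)
      then have "\<bar>\<Sum>s=1..t. X s \<omega>\<bar> \<le> \<bar>\<Sum>s=1..t. Y s \<omega>\<bar> + real t * r"
        using assms(3) unfolding Y_def r_def by (intro abs_partial_sum_le_centred_truncation) auto
      moreover have "(\<epsilon> + r) * (\<gamma> + real t) < \<bar>\<Sum>s=1..t. X s \<omega>\<bar>"
        using big assms(2) by (simp add: field_simps)
      moreover have "0 \<le> r * \<gamma>"
        using assms(2) by (intro mult_nonneg_nonneg) (simp_all add: r_def tail_mass_nonneg)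
      ultimately have "\<epsilon> * (\<gamma> + real t) \<le> \<bar>\<Sum>s=1..t. Y s \<omega>\<bar>"
        by (simp add: algebra_simps)
      then have "\<omega> \<in> crossed"
        using \<omega> t assms(2) unfolding crossed_def by (auto simp: field_simps)
      then show ?thesis ..
    qed simp
  qed
  then have "prob {\<omega> \<in> space M. \<exists>t\<in>{1..n}. \<epsilon> + r < \<bar>\<Sum>s=1..t. X s \<omega>\<bar> / (\<gamma> + real t)}
      \<le> prob exceeded + prob crossed"
    unfolding exceeded_def crossed_def
    by (intro order_trans[OF finite_measure_mono measure_Un_le]) auto
  with prob_crossed prob_exceeded_level_le[where K=K and n=n] show ?thesis
    unfolding exceeded_def r_def by linarith
qed

lemma prob_sup_partial_sums_exceed_le:
  assumes "\<epsilon> > 0" and "\<gamma> > 0" and "K \<ge> 1"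
  shows "prob {\<omega> \<in> space M. (SUP t::nat. ereal (\<bar>\<Sum>s=1..t. X s \<omega>\<bar> / (\<gamma> + real t)))
      > ereal (\<epsilon> + tail_mass M (X 1) K)}
    \<le> tail_mass M (X 1) K + (K\<^sup>2 / \<gamma> + 2 * tail_mass M (X 1) K) / \<epsilon>\<^sup>2"
proof -
  define r where "r = tail_mass M (X 1) K"
  define A where
    "A n = {\<omega> \<in> space M. \<exists>t\<in>{1..n}. \<epsilon> + r < \<bar>\<Sum>s=1..t. X s \<omega>\<bar> / (\<gamma> + real t)}" for n
  have "0 < \<epsilon> + r"
    using assms(1) tail_mass_nonneg[of M "X 1" K] by (simp add: r_def)
  then have "ereal (\<epsilon> + r) < (SUP t::nat. ereal (\<bar>\<Sum>s=1..t. X s \<omega>\<bar> / (\<gamma> + real t)))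
      \<longleftrightarrow> (\<exists>t\<ge>1. \<epsilon> + r < \<bar>\<Sum>s=1..t. X s \<omega>\<bar> / (\<gamma> + real t))" for \<omega>
  proof -
    define f where "f t = \<bar>\<Sum>s=1..t. X s \<omega>\<bar> / (\<gamma> + real t)" for t
    have "(\<exists>t. \<epsilon> + r < f t) \<longleftrightarrow> (\<exists>t\<ge>1. \<epsilon> + r < f t)"
    proof
      assume "\<exists>t. \<epsilon> + r < f t"
      then obtain t where t: "\<epsilon> + r < f t" ..
      with \<open>0 < \<epsilon> + r\<close> have "t \<ge> 1"
        by (cases t) (auto simp: f_def)
      with t show "\<exists>t\<ge>1. \<epsilon> + r < f t"
        by blast
    qed blast
    then show ?thesis
      unfolding less_SUP_iff f_def[symmetric] by simp
  qed
  then have "{\<omega> \<in> space M. (SUP t::nat. ereal (\<bar>\<Sum>s=1..t. X s \<omega>\<bar> / (\<gamma> + real t))) > ereal (\<epsilon> + r)}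
      = (\<Union>n. A n)"
    unfolding A_def by auto (meson atLeastAtMost_iff order_refl)
  moreover have "(\<lambda>n. prob (A n)) \<longlonglongrightarrow> prob (\<Union>n. A n)"
    by (rule finite_Lim_measure_incseq) (auto simp: A_def incseq_def)
  then have "prob (\<Union>n. A n) \<le> r + (K\<^sup>2 / \<gamma> + 2 * r) / \<epsilon>\<^sup>2"
    using prob_partial_sums_exceed_le[OF assms] unfolding A_def r_def
    by (intro LIMSEQ_le_const2) auto
  ultimately show ?thesis
    by (simp add: r_def)
qed

end

lemma centred_iid_zero_padding:
  assumes "prob_space M"
    and "\<And>t. t \<ge> 1 \<Longrightarrow> X t \<in> borel_measurable M"
    and "prob_space.indep_vars M (\<lambda>_. borel) X {1..}"
    and "\<And>t. t \<ge> 1 \<Longrightarrow> distr M borel (X t) = distr M borel (X 1)"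
    and "integrable M (X 1)"
    and "(\<integral>\<omega>. X 1 \<omega> \<partial>M) = 0"
  shows "centred_iid M (\<lambda>t. if t = 0 then (\<lambda>_. 0) else X t)"
proof -
  interpret prob_space M by fact
  show ?thesis
  proof
    show "indep_vars (\<lambda>_. borel) (\<lambda>t. if t = 0 then (\<lambda>_. 0) else X t) {1..}"
      using assms(3) by (rule indep_vars_cong[THEN iffD1, rotated 3]) auto
    show "distr M borel (if t = 0 then (\<lambda>_. 0) else X t)
        = distr M borel (if (1::nat) = 0 then (\<lambda>_. 0) else X 1)" if "t \<ge> 1" for t
      using assms(4)[OF that] that by simp
  qed (use assms(2,5,6) in auto)
qed

theorem mainTheorem6:
  fixes M :: "'a measure" and X :: "nat \<Rightarrow> 'a \<Rightarrow> real"
    and \<epsilon> \<gamma> K :: real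
  assumes "prob_space M"
    and rv: "\<And>t. t \<ge> 1 \<Longrightarrow> X t \<in> borel_measurable M"
    and indep: "prob_space.indep_vars M (\<lambda>_. borel) X {1..}"
    and ident: "\<And>t. t \<ge> 1 \<Longrightarrow> distr M borel (X t) = distr M borel (X 1)"
    and integ: "integrable M (X 1)"
    and mean0: "(\<integral>\<omega>. X 1 \<omega> \<partial>M) = 0"
    and eps: "\<epsilon> > 0" and gam: "\<gamma> > 0" and K: "K \<ge> 1"
  shows "measure M {\<omega> \<in> space M.
            (SUP t::nat. ereal (\<bar>\<Sum>s=1..t. X s \<omega>\<bar> / (\<gamma> + real t)))
              > ereal (\<epsilon> + tail_mass M (X 1) K)}
         \<le> 8 * K\<^sup>2 / (\<gamma> * \<epsilon>\<^sup>2) + (16 / \<epsilon>\<^sup>2 + 2) * tail_mass M (X 1) K"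
proof -
  \<comment> \<open>\<open>X 0\<close> is unconstrained (possibly not even measurable); it never enters the sums.\<close>
  define Z where "Z t = (if t = 0 then (\<lambda>_. 0) else X t)" for t
  interpret centred_iid M Z
    unfolding Z_def using assms(1-6) by (rule centred_iid_zero_padding)
  define r where "r = tail_mass M (X 1) K"
  have sum_Z: "(\<Sum>s=1..t. Z s \<omega>) = (\<Sum>s=1..t. X s \<omega>)" for t \<omega>
    by (intro sum.cong) (auto simp: Z_def)
  have "measure M {\<omega> \<in> space M.
        (SUP t::nat. ereal (\<bar>\<Sum>s=1..t. X s \<omega>\<bar> / (\<gamma> + real t))) > ereal (\<epsilon> + r)}
      \<le> r + (K\<^sup>2 / \<gamma> + 2 * r) / \<epsilon>\<^sup>2"
    using prob_sup_partial_sums_exceed_le[OF eps gam K] by (simp add: sum_Z r_def Z_def)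
  also have "\<dots> \<le> 8 * K\<^sup>2 / (\<gamma> * \<epsilon>\<^sup>2) + (16 / \<epsilon>\<^sup>2 + 2) * r"
  proof -
    have "0 \<le> r"
      by (simp add: r_def tail_mass_nonneg)
    then have "2 * r / \<epsilon>\<^sup>2 \<le> 16 * r / \<epsilon>\<^sup>2"
      by (simp add: divide_right_mono)
    moreover have "K\<^sup>2 / (\<gamma> * \<epsilon>\<^sup>2) \<le> 8 * K\<^sup>2 / (\<gamma> * \<epsilon>\<^sup>2)"
      using gam by (simp add: divide_right_mono)
    ultimately show ?thesis
      using \<open>0 \<le> r\<close> by (simp add: add_divide_distrib algebra_simps)
  qed
  finally show ?thesis
    by (simp add: r_def)
qed

end
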